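(* Let $\mathcal{B}$ and $\mathcal{C}$ be algebras in a functional language $\mathcal{L}$. If $\mathrm{Th}_{\exists}(\mathcal{B})\supseteq\mathrm{Th}_{\exists}(\mathcal{C})$, then $\mathcal{C}$ is isomorphic to some limit algebra over $\mathcal{B}$.
   Context: Functional language: operation symbols $F$ (arity $n_F$) and constants only. $\mathrm{Th}_\exists(\mathcal{M})$ is the set of existential $\mathcal{L}$-sentences true in $\mathcal{M}$. A diagram-formula in a finite reduct $\mathcal{L}'$ of $\mathcal{L}$ in finite variables $X$ is a conjunction of atomic formulas and negations such that $\neg(x=y)$ is a conjunct for distinct $x,y\in X$, for each $F\in\mathcal{L}'$ and $(x_0,\dots,x_{n_F})\in X^{n_F+1}$ exactly one of $F(x_1,\dots,x_{n_F})=x_0$ and its negation is a conjunct, and for each constant $c\in\mathcal{L}'$ and $x\in X$ exactly one of $x=c$, $\neg(x=c)$ is a conjunct. A direct system of formulas $\Lambda=(I,\varphi_i,\gamma_{ij})$: $(I,\le)$ directed; $\varphi_i$ consistent diagram-formulas in finite reducts $\mathcal{L}_i$ and finite variables $X_i$; maps $\gamma_{ij}:X_i\to X_j$ ($i\le j$) with $\gamma_{ii}=\mathrm{id}$, $\gamma_{jk}\gamma_{ij}=\gamma_{ik}$, conjuncts of $\varphi_i(\gamma_{ij}(X_i))$ are conjuncts of $\varphi_j$; every constant appears in a conjunct $x=c$ of some $\varphi_i$; for every $F,i,(x_1,\dots,x_{n_F})\in X_i^{n_F}$ some $j\ge i$ has a conjunct $F(\gamma_{ij}(x_1),\dots,\gamma_{ij}(x_{n_F}))=x_j$.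 The limit algebra $L(\Lambda)$ has universe $\{(x,i):x\in X_i\}/\!\equiv$, $(x,i)\equiv(y,j)$ iff $\gamma_{ik}(x)=\gamma_{jk}(y)$ for some $k\ge i,j$, with constants and operations read off from the conjuncts $x=c$ and $F(\dots)=x_j$ (well defined). It is a limit algebra over $\mathcal{B}$ if each $\varphi_i$ is true in $\mathcal{B}$ under some assignment $X_i\to B$. *)

theory Defs
  imports Main
begin

text \<open>A functional language is given by a set Fs of operation symbols with arity
  function ar, and a set Cs of constant symbols.\<close>

record ('f, 'c, 'a) alg =
  alg_univ :: "'a set"
  alg_op   :: "'f \<Rightarrow> 'a list \<Rightarrow> 'a"
  alg_cst  :: "'c \<Rightarrow> 'a"

definition is_alg :: "'f set \<Rightarrow> ('f \<Rightarrow> nat) \<Rightarrow> 'c set \<Rightarrow> ('f, 'c, 'a, 'z) alg_scheme \<Rightarrow> bool" where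
  "is_alg Fs ar Cs A \<longleftrightarrow>
     alg_univ A \<noteq> {} \<and>
     (\<forall>F\<in>Fs. \<forall>xs. set xs \<subseteq> alg_univ A \<and> length xs = ar F \<longrightarrow> alg_op A F xs \<in> alg_univ A) \<and>
     (\<forall>c\<in>Cs. alg_cst A c \<in> alg_univ A)"

datatype ('f, 'c, 'v) trm = Var 'v | Cst 'c | App 'f "('f, 'c, 'v) trm list"

datatype ('f, 'c, 'v) qf =
    Eq "('f, 'c, 'v) trm" "('f, 'c, 'v) trm"
  | Neg "('f, 'c, 'v) qf"
  | Conj "('f, 'c, 'v) qf" "('f, 'c, 'v) qf"
  | Disj "('f, 'c, 'v) qf" "('f, 'c, 'v) qf"

fun evt :: "('f, 'c, 'a, 'z) alg_scheme \<Rightarrow> ('v \<Rightarrow> 'a) \<Rightarrow> ('f, 'c, 'v) trm \<Rightarrow> 'a" where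
  "evt M a (Var v) = a v"
| "evt M a (Cst c) = alg_cst M c"
| "evt M a (App F ts) = alg_op M F (map (evt M a) ts)"

fun sat :: "('f, 'c, 'a, 'z) alg_scheme \<Rightarrow> ('v \<Rightarrow> 'a) \<Rightarrow> ('f, 'c, 'v) qf \<Rightarrow> bool" where
  "sat M a (Eq s t) = (evt M a s = evt M a t)"
| "sat M a (Neg p) = (\<not> sat M a p)"
| "sat M a (Conj p q) = (sat M a p \<and> sat M a q)"
| "sat M a (Disj p q) = (sat M a p \<or> sat M a q)"

fun wf_trm :: "'f set \<Rightarrow> ('f \<Rightarrow> nat) \<Rightarrow> 'c set \<Rightarrow> nat \<Rightarrow> ('f, 'c, nat) trm \<Rightarrow> bool" where
  "wf_trm Fs ar Cs n (Var v) = (v < n)"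
| "wf_trm Fs ar Cs n (Cst c) = (c \<in> Cs)"
| "wf_trm Fs ar Cs n (App F ts) = (F \<in> Fs \<and> length ts = ar F \<and> (\<forall>t\<in>set ts. wf_trm Fs ar Cs n t))"

fun wf_qf :: "'f set \<Rightarrow> ('f \<Rightarrow> nat) \<Rightarrow> 'c set \<Rightarrow> nat \<Rightarrow> ('f, 'c, nat) qf \<Rightarrow> bool" where
  "wf_qf Fs ar Cs n (Eq s t) = (wf_trm Fs ar Cs n s \<and> wf_trm Fs ar Cs n t)"
| "wf_qf Fs ar Cs n (Neg p) = wf_qf Fs ar Cs n p"
| "wf_qf Fs ar Cs n (Conj p q) = (wf_qf Fs ar Cs n p \<and> wf_qf Fs ar Cs n q)"
| "wf_qf Fs ar Cs n (Disj p q) = (wf_qf Fs ar Cs n p \<and> wf_qf Fs ar Cs n q)"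

text \<open>An existential sentence is represented as a pair (n, phi): the sentence
  Ex x_0 ... x_(n-1). phi with phi quantifier-free in the variables 0..<n.\<close>
definition Th_ex :: "'f set \<Rightarrow> ('f \<Rightarrow> nat) \<Rightarrow> 'c set \<Rightarrow> ('f, 'c, 'a, 'z) alg_scheme
    \<Rightarrow> (nat \<times> ('f, 'c, nat) qf) set" where
  "Th_ex Fs ar Cs A = {(n, \<phi>). wf_qf Fs ar Cs n \<phi> \<and>
       (\<exists>v. (\<forall>i<n. v i \<in> alg_univ A) \<and> sat A v \<phi>)}"

text \<open>A diagram-formula (conjunction) is represented by its set of conjuncts S.\<close>
definition diagram_formula :: "'f set \<Rightarrow> ('f \<Rightarrow> nat) \<Rightarrow> 'c set \<Rightarrow> 'f set \<Rightarrow> 'c set \<Rightarrow> 'v set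
    \<Rightarrow> ('f, 'c, 'v) qf set \<Rightarrow> bool" where
  "diagram_formula Fs ar Cs LF LC X S \<longleftrightarrow>
     finite LF \<and> LF \<subseteq> Fs \<and> finite LC \<and> LC \<subseteq> Cs \<and> finite X \<and>
     (\<forall>\<phi>\<in>S.
        (\<exists>x y. x \<in> X \<and> y \<in> X \<and> x \<noteq> y \<and> \<phi> = Neg (Eq (Var x) (Var y))) \<or>
        (\<exists>F xs x0. F \<in> LF \<and> set xs \<subseteq> X \<and> length xs = ar F \<and> x0 \<in> X \<and>
            (\<phi> = Eq (App F (map Var xs)) (Var x0) \<or> \<phi> = Neg (Eq (App F (map Var xs)) (Var x0)))) \<or>
        (\<exists>x c. x \<in> X \<and> c \<in> LC \<and> (\<phi> = Eq (Var x) (Cst c) \<or> \<phi> = Neg (Eq (Var x) (Cst c))))) \<and>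
     (\<forall>x\<in>X. \<forall>y\<in>X. x \<noteq> y \<longrightarrow> Neg (Eq (Var x) (Var y)) \<in> S) \<and>
     (\<forall>F\<in>LF. \<forall>xs x0. set xs \<subseteq> X \<and> length xs = ar F \<and> x0 \<in> X \<longrightarrow>
        ((Eq (App F (map Var xs)) (Var x0) \<in> S) \<noteq> (Neg (Eq (App F (map Var xs)) (Var x0)) \<in> S))) \<and>
     (\<forall>c\<in>LC. \<forall>x\<in>X. (Eq (Var x) (Cst c) \<in> S) \<noteq> (Neg (Eq (Var x) (Cst c)) \<in> S))"

definition consistent_fm :: "'f set \<Rightarrow> ('f \<Rightarrow> nat) \<Rightarrow> 'c set \<Rightarrow> 'v set \<Rightarrow> ('f, 'c, 'v) qf set \<Rightarrow> bool" where
  "consistent_fm Fs ar Cs X S \<longleftrightarrow>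
     (\<exists>M :: ('f, 'c, 'v option) alg. is_alg Fs ar Cs M \<and>
        (\<exists>a. a ` X \<subseteq> alg_univ M \<and> (\<forall>\<phi>\<in>S. sat M a \<phi>)))"

record ('i, 'f, 'c, 'v) dsys =
  dI   :: "'i set"
  dle  :: "'i \<Rightarrow> 'i \<Rightarrow> bool"
  dLF  :: "'i \<Rightarrow> 'f set"
  dLC  :: "'i \<Rightarrow> 'c set"
  dX   :: "'i \<Rightarrow> 'v set"
  dphi :: "'i \<Rightarrow> ('f, 'c, 'v) qf set"
  dgam :: "'i \<Rightarrow> 'i \<Rightarrow> 'v \<Rightarrow> 'v"

definition direct_system :: "'f set \<Rightarrow> ('f \<Rightarrow> nat) \<Rightarrow> 'c set \<Rightarrow> ('i, 'f, 'c, 'v) dsys \<Rightarrow> bool" where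
  "direct_system Fs ar Cs D \<longleftrightarrow>
     \<comment> \<open>(I, le) is a directed (preordered) set\<close>
     dI D \<noteq> {} \<and>
     (\<forall>i\<in>dI D. dle D i i) \<and>
     (\<forall>i\<in>dI D. \<forall>j\<in>dI D. \<forall>k\<in>dI D. dle D i j \<and> dle D j k \<longrightarrow> dle D i k) \<and>
     (\<forall>i\<in>dI D. \<forall>j\<in>dI D. \<exists>k\<in>dI D. dle D i k \<and> dle D j k) \<and>
     \<comment> \<open>consistent diagram-formulas\<close>
     (\<forall>i\<in>dI D. diagram_formula Fs ar Cs (dLF D i) (dLC D i) (dX D i) (dphi D i) \<and>
                consistent_fm Fs ar Cs (dX D i) (dphi D i)) \<and>
     \<comment> \<open>the maps gamma\<close>
     (\<forall>i\<in>dI D. \<forall>j\<in>dI D. dle D i j \<longrightarrow> dgam D i j ` dX D i \<subseteq> dX D j) \<and>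
     (\<forall>i\<in>dI D. \<forall>x\<in>dX D i. dgam D i i x = x) \<and>
     (\<forall>i\<in>dI D. \<forall>j\<in>dI D. \<forall>k\<in>dI D. dle D i j \<and> dle D j k \<longrightarrow>
        (\<forall>x\<in>dX D i. dgam D j k (dgam D i j x) = dgam D i k x)) \<and>
     (\<forall>i\<in>dI D. \<forall>j\<in>dI D. dle D i j \<longrightarrow>
        (\<forall>\<phi>\<in>dphi D i. map_qf id id (dgam D i j) \<phi> \<in> dphi D j)) \<and>
     \<comment> \<open>every constant is named\<close>
     (\<forall>c\<in>Cs. \<exists>i\<in>dI D. \<exists>x. Eq (Var x) (Cst c) \<in> dphi D i) \<and>
     \<comment> \<open>every operation is eventually defined\<close>
     (\<forall>F\<in>Fs. \<forall>i\<in>dI D. \<forall>xs. set xs \<subseteq> dX D i \<and> length xs = ar F \<longrightarrow>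
        (\<exists>j\<in>dI D. dle D i j \<and>
           (\<exists>x. Eq (App F (map (\<lambda>y. Var (dgam D i j y)) xs)) (Var x) \<in> dphi D j)))"

definition ldom :: "('i, 'f, 'c, 'v) dsys \<Rightarrow> ('v \<times> 'i) set" where
  "ldom D = {(x, i). i \<in> dI D \<and> x \<in> dX D i}"

definition lrel :: "('i, 'f, 'c, 'v) dsys \<Rightarrow> (('v \<times> 'i) \<times> ('v \<times> 'i)) set" where
  "lrel D = {(p, q). p \<in> ldom D \<and> q \<in> ldom D \<and>
     (\<exists>k\<in>dI D. dle D (snd p) k \<and> dle D (snd q) k \<and>
        dgam D (snd p) k (fst p) = dgam D (snd q) k (fst q))}"

definition limit_alg :: "('f \<Rightarrow> nat) \<Rightarrow> ('i, 'f, 'c, 'v) dsys \<Rightarrow> ('f, 'c, ('v \<times> 'i) set) alg" where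
  "limit_alg ar D =
     \<lparr> alg_univ = ldom D // lrel D,
       alg_op = (\<lambda>F As. lrel D `` {SOME q. \<exists>i xs. i \<in> dI D \<and> snd q \<in> dI D \<and> dle D i (snd q) \<and>
                     set xs \<subseteq> dX D i \<and> length xs = ar F \<and>
                     map (\<lambda>y. lrel D `` {(y, i)}) xs = As \<and>
                     Eq (App F (map (\<lambda>y. Var (dgam D i (snd q) y)) xs)) (Var (fst q)) \<in> dphi D (snd q)}),
       alg_cst = (\<lambda>c. lrel D `` {SOME p. p \<in> ldom D \<and> Eq (Var (fst p)) (Cst c) \<in> dphi D (snd p)}) \<rparr>"

definition limit_over :: "'f set \<Rightarrow> ('f \<Rightarrow> nat) \<Rightarrow> 'c set \<Rightarrow> ('f, 'c, 'b, 'z) alg_scheme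
    \<Rightarrow> ('i, 'f, 'c, 'v) dsys \<Rightarrow> bool" where
  "limit_over Fs ar Cs B D \<longleftrightarrow> direct_system Fs ar Cs D \<and>
     (\<forall>i\<in>dI D. \<exists>a. a ` dX D i \<subseteq> alg_univ B \<and> (\<forall>\<phi>\<in>dphi D i. sat B a \<phi>))"

definition alg_iso :: "'f set \<Rightarrow> ('f \<Rightarrow> nat) \<Rightarrow> 'c set \<Rightarrow> ('f, 'c, 'a, 'z) alg_scheme
    \<Rightarrow> ('f, 'c, 'b, 'y) alg_scheme \<Rightarrow> ('a \<Rightarrow> 'b) \<Rightarrow> bool" where
  "alg_iso Fs ar Cs A B h \<longleftrightarrow> bij_betw h (alg_univ A) (alg_univ B) \<and>
     (\<forall>F\<in>Fs. \<forall>xs. set xs \<subseteq> alg_univ A \<and> length xs = ar F \<longrightarrow>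
        h (alg_op A F xs) = alg_op B F (map h xs)) \<and>
     (\<forall>c\<in>Cs. h (alg_cst A c) = alg_cst B c)"

end

theory Submission
  imports Defs "HOL-Library.Product_Order"
begin

text \<open>Index a direct system by the triples (LF, LC, X) of a finite sublanguage and a finite subset
  of C, ordered by inclusion; put at (LF, LC, X) the diagram of C on X in the sublanguage, and let
  all transition maps be the identity.  Its limit algebra is C again.  With its variables
  existentially quantified, each of these finite diagrams is an existential sentence true in C,
  hence true in B, so the system is a system over B.\<close>

definition diagram_literals :: "('f \<Rightarrow> nat) \<Rightarrow> 'f set \<Rightarrow> 'c set \<Rightarrow> 'v set \<Rightarrow> ('f, 'c, 'v) qf set" where
  "diagram_literals ar LF LC X =
     (\<lambda>(x, y). Neg (Eq (Var x) (Var y))) ` {(x, y). x \<in> X \<and> y \<in> X \<and> x \<noteq> y} \<union>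
     (\<Union>F\<in>LF. \<Union>xs\<in>{xs. set xs \<subseteq> X \<and> length xs = ar F}. \<Union>x0\<in>X.
        {Eq (App F (map Var xs)) (Var x0), Neg (Eq (App F (map Var xs)) (Var x0))}) \<union>
     (\<Union>x\<in>X. \<Union>c\<in>LC. {Eq (Var x) (Cst c), Neg (Eq (Var x) (Cst c))})"

lemma finite_diagram_literals:
  "finite LF \<Longrightarrow> finite LC \<Longrightarrow> finite X \<Longrightarrow> finite (diagram_literals ar LF LC X)"
  unfolding diagram_literals_def
  by (intro finite_UnI finite_imageI finite_UN_I)
     (use finite_lists_length_eq[of X] in \<open>auto intro: finite_subset[of _ "X \<times> X"]\<close>)

lemma diagram_literals_mono:
  "LF \<subseteq> LF' \<Longrightarrow> LC \<subseteq> LC' \<Longrightarrow> X \<subseteq> X' \<Longrightarrow> diagram_literals ar LF LC X \<subseteq> diagram_literals ar LF' LC' X'"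
  unfolding diagram_literals_def by fastforce

lemma vars_diagram_literals: "\<phi> \<in> diagram_literals ar LF LC X \<Longrightarrow> set3_qf \<phi> \<subseteq> X"
  unfolding diagram_literals_def by auto

lemma wf_qf_rename_diagram_literals:
  "\<phi> \<in> diagram_literals ar LF LC X \<Longrightarrow> LF \<subseteq> Fs \<Longrightarrow> LC \<subseteq> Cs \<Longrightarrow> g ` X \<subseteq> {..<n} \<Longrightarrow>
   wf_qf Fs ar Cs n (map_qf id id g \<phi>)"
  unfolding diagram_literals_def by (auto simp: subset_eq)

definition alg_diagram :: "('f \<Rightarrow> nat) \<Rightarrow> ('f, 'c, 'a, 'z) alg_scheme \<Rightarrow> 'f set \<Rightarrow> 'c set \<Rightarrow> 'a set
    \<Rightarrow> ('f, 'c, 'a) qf set" where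
  "alg_diagram ar C LF LC X = {\<phi> \<in> diagram_literals ar LF LC X. sat C id \<phi>}"

lemma diagram_formula_alg_diagram:
  "finite LF \<Longrightarrow> LF \<subseteq> Fs \<Longrightarrow> finite LC \<Longrightarrow> LC \<subseteq> Cs \<Longrightarrow> finite X \<Longrightarrow>
   diagram_formula Fs ar Cs LF LC X (alg_diagram ar C LF LC X)"
  unfolding diagram_formula_def alg_diagram_def by (auto simp: diagram_literals_def)

lemma alg_diagram_mono:
  "LF \<subseteq> LF' \<Longrightarrow> LC \<subseteq> LC' \<Longrightarrow> X \<subseteq> X' \<Longrightarrow> alg_diagram ar C LF LC X \<subseteq> alg_diagram ar C LF' LC' X'"
  unfolding alg_diagram_def using diagram_literals_mono by blast

lemma evt_cong_vars: "(\<And>x. x \<in> set3_trm t \<Longrightarrow> a x = b x) \<Longrightarrow> evt M a t = evt M b t"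
  by (induction t) (auto intro!: arg_cong[where f = "alg_op M _"] map_cong)

lemma sat_cong_vars: "(\<And>x. x \<in> set3_qf \<phi> \<Longrightarrow> a x = b x) \<Longrightarrow> sat M a \<phi> = sat M b \<phi>"
  by (induction \<phi>) (auto cong: evt_cong_vars)

lemma evt_rename: "evt M a (map_trm id id g t) = evt M (a \<circ> g) t"
  by (induction t) (auto intro!: arg_cong[where f = "alg_op M _"])

lemma sat_rename: "sat M a (map_qf id id g \<phi>) = sat M (a \<circ> g) \<phi>"
  using evt_rename[of M a g] by (induction \<phi>) (auto simp: id_def comp_def)

lemma sat_foldr_Conj: "sat M a (foldr Conj \<phi>s \<psi>) \<longleftrightarrow> sat M a \<psi> \<and> (\<forall>\<phi>\<in>set \<phi>s. sat M a \<phi>)"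
  by (induction \<phi>s) auto

lemma wf_qf_foldr_Conj:
  "wf_qf Fs ar Cs n (foldr Conj \<phi>s \<psi>) \<longleftrightarrow> wf_qf Fs ar Cs n \<psi> \<and> (\<forall>\<phi>\<in>set \<phi>s. wf_qf Fs ar Cs n \<phi>)"
  by (induction \<phi>s) auto

text \<open>consistent_fm asks for a model whose carrier type is the variable type wrapped in option;
  Some embeds any algebra into such a model.\<close>

definition option_alg :: "('f, 'c, 'a, 'z) alg_scheme \<Rightarrow> ('f, 'c, 'a option) alg" where
  "option_alg C = \<lparr>alg_univ = Some ` alg_univ C, alg_op = \<lambda>F ys. Some (alg_op C F (map the ys)),
      alg_cst = \<lambda>c. Some (alg_cst C c)\<rparr>"

lemma evt_option_alg: "evt (option_alg C) (Some \<circ> a) t = Some (evt C a t)"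
  by (induction t) (auto simp: option_alg_def intro!: arg_cong[where f = "alg_op C _"])

lemma sat_option_alg: "sat (option_alg C) (Some \<circ> a) \<phi> = sat C a \<phi>"
  using evt_option_alg[of C a] by (induction \<phi>) (auto simp: comp_def)

lemma is_alg_option_alg:
  assumes "is_alg Fs ar Cs C"
  shows "is_alg Fs ar Cs (option_alg C)"
proof -
  have "set (map the ys) \<subseteq> alg_univ C" if "set ys \<subseteq> Some ` alg_univ C" for ys
    using that by auto
  with assms show ?thesis unfolding is_alg_def option_alg_def by auto
qed

lemma consistent_fm_sat:
  assumes "is_alg Fs ar Cs C" and "X \<subseteq> alg_univ C" and "\<forall>\<phi>\<in>S. sat C id \<phi>"
  shows "consistent_fm Fs ar Cs X S"
  unfolding consistent_fm_def
  using assms is_alg_option_alg[OF assms(1)] sat_option_alg[of C id]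
  by (intro exI[of _ "option_alg C"] exI[of _ Some]) (auto simp: option_alg_def)

lemma Th_ex_transfer_literals:
  fixes C :: "('f, 'c, 'a, 'z) alg_scheme"
  assumes Th: "Th_ex Fs ar Cs C \<subseteq> Th_ex Fs ar Cs B" and C: "alg_univ C \<noteq> {}"
    and L: "LF \<subseteq> Fs" "LC \<subseteq> Cs" and X: "finite X" and S: "finite S" "S \<subseteq> diagram_literals ar LF LC X"
    and a: "a ` X \<subseteq> alg_univ C" "\<forall>\<phi>\<in>S. sat C a \<phi>"
  shows "\<exists>b. b ` X \<subseteq> alg_univ B \<and> (\<forall>\<phi>\<in>S. sat B b \<phi>)"
proof -
  obtain \<phi>s where \<phi>s: "set \<phi>s = S" using finite_list S(1) by blast
  obtain idx where idx: "bij_betw idx X {0..<card X}" using ex_bij_betw_finite_nat X by blast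
  define n where "n = card X"
  obtain c0 where c0: "c0 \<in> alg_univ C" using C by blast
  define v where "v k = (if k < n then a (inv_into X idx k) else c0)" for k
  have v_idx: "(v \<circ> idx) x = a x" if "x \<in> X" for x
    using idx that by (auto simp: v_def n_def bij_betw_def)
  have idx_range: "idx ` X \<subseteq> {..<n}" using idx by (auto simp: n_def bij_betw_def)
  \<comment> \<open>The dummy variable n gives the conjunction a well-formed base even when S is empty.\<close>
  define \<psi> where "\<psi> = foldr Conj (map (map_qf id id idx) \<phi>s) (Eq (Var n) (Var n))"
  have sat_iff: "sat M w \<psi> \<longleftrightarrow> (\<forall>\<phi>\<in>S. sat M (w \<circ> idx) \<phi>)" for M and w
    by (simp add: \<psi>_def sat_foldr_Conj sat_rename \<phi>s)
  have "(Suc n, \<psi>) \<in> Th_ex Fs ar Cs C"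
    unfolding Th_ex_def
  proof (simp, intro conjI exI[of _ v])
    have "idx ` X \<subseteq> {..<Suc n}" using idx_range by auto
    then show "wf_qf Fs ar Cs (Suc n) \<psi>"
      using S(2) L wf_qf_rename_diagram_literals[of _ ar LF LC X Fs Cs idx "Suc n"]
      by (auto simp: \<psi>_def wf_qf_foldr_Conj \<phi>s)
    show "\<forall>k<Suc n. v k \<in> alg_univ C"
      using a(1) c0 idx by (auto simp: v_def n_def bij_betw_def inv_into_into)
    have "sat C (v \<circ> idx) \<phi> = sat C a \<phi>" if "\<phi> \<in> S" for \<phi>
      using that S(2) vars_diagram_literals v_idx by (intro sat_cong_vars) blast
    then show "sat C v \<psi>" using a(2) sat_iff by blast
  qed
  with Th have "(Suc n, \<psi>) \<in> Th_ex Fs ar Cs B" by blast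
  then obtain w where w: "\<forall>k<Suc n. w k \<in> alg_univ B" "sat B w \<psi>"
    unfolding Th_ex_def by auto
  show ?thesis
    using w idx_range sat_iff[of B w] by (intro exI[of _ "w \<circ> idx"]) auto
qed

context
  fixes Fs :: "'f set" and ar :: "'f \<Rightarrow> nat" and Cs :: "'c set" and C :: "('f, 'c, 'a) alg"
begin

definition diagram_index :: "('f set \<times> 'c set \<times> 'a set) set" where
  "diagram_index = {(LF, LC, X). finite LF \<and> LF \<subseteq> Fs \<and> finite LC \<and> LC \<subseteq> Cs \<and>
     finite X \<and> X \<subseteq> alg_univ C}"

definition diagram_system :: "('f set \<times> 'c set \<times> 'a set, 'f, 'c, 'a) dsys" where
  "diagram_system = \<lparr>dI = diagram_index, dle = (\<le>), dLF = fst, dLC = fst \<circ> snd, dX = snd \<circ> snd,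
     dphi = \<lambda>i. alg_diagram ar C (fst i) (fst (snd i)) (snd (snd i)), dgam = \<lambda>i j x. x\<rparr>"

lemma diagram_index_directed:
  "i \<in> diagram_index \<Longrightarrow> j \<in> diagram_index \<Longrightarrow> \<exists>k\<in>diagram_index. i \<le> k \<and> j \<le> k"
  by (intro bexI[of _ "sup i j"]) (auto simp: diagram_index_def)

lemma direct_system_diagram_system:
  assumes C: "is_alg Fs ar Cs C"
  shows "direct_system Fs ar Cs diagram_system"
  unfolding direct_system_def
proof (simp add: diagram_system_def, intro conjI ballI allI impI)
  show "diagram_index \<noteq> {}" unfolding diagram_index_def by auto
next
  fix i j assume "i \<in> diagram_index" "j \<in> diagram_index"
  then show "\<exists>k\<in>diagram_index. i \<le> k \<and> j \<le> k" by (rule diagram_index_directed)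
next
  fix i assume i: "i \<in> diagram_index"
  then show "diagram_formula Fs ar Cs (fst i) (fst (snd i)) (snd (snd i))
      (alg_diagram ar C (fst i) (fst (snd i)) (snd (snd i)))"
    by (intro diagram_formula_alg_diagram) (auto simp: diagram_index_def)
  from i show "consistent_fm Fs ar Cs (snd (snd i)) (alg_diagram ar C (fst i) (fst (snd i)) (snd (snd i)))"
    by (intro consistent_fm_sat[OF C]) (auto simp: diagram_index_def alg_diagram_def)
next
  fix i j \<phi> assume "i \<le> j" and \<phi>: "\<phi> \<in> alg_diagram ar C (fst i) (fst (snd i)) (snd (snd i))"
  then have "alg_diagram ar C (fst i) (fst (snd i)) (snd (snd i)) \<subseteq>
      alg_diagram ar C (fst j) (fst (snd j)) (snd (snd j))"
    by (intro alg_diagram_mono fst_mono snd_mono)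
  with \<phi> show "map_qf id id (\<lambda>x. x) \<phi> \<in> alg_diagram ar C (fst j) (fst (snd j)) (snd (snd j))"
    by (auto simp: id_def[symmetric] qf.map_id)
next
  fix c assume "c \<in> Cs"
  with C show "\<exists>i\<in>diagram_index. \<exists>x. Eq (Var x) (Cst c) \<in> alg_diagram ar C (fst i) (fst (snd i)) (snd (snd i))"
    by (intro bexI[of _ "({}, {c}, {alg_cst C c})"] exI[of _ "alg_cst C c"])
       (auto simp: diagram_index_def alg_diagram_def diagram_literals_def is_alg_def)
next
  fix F i xs assume F: "F \<in> Fs" and i: "i \<in> diagram_index" and xs: "set xs \<subseteq> snd (snd i) \<and> length xs = ar F"
  obtain LF LC X where i_eq: "i = (LF, LC, X)" by (cases i)
  have "alg_op C F xs \<in> alg_univ C" using C F i xs unfolding is_alg_def diagram_index_def i_eq by auto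
  with F i xs show "\<exists>j\<in>diagram_index. i \<le> j \<and>
      (\<exists>x. Eq (App F (map Var xs)) (Var x) \<in> alg_diagram ar C (fst j) (fst (snd j)) (snd (snd j)))"
    by (intro bexI[of _ "(insert F LF, LC, insert (alg_op C F xs) X)"] conjI exI[of _ "alg_op C F xs"])
       (auto simp: i_eq diagram_index_def alg_diagram_def diagram_literals_def comp_def)
next
  fix i j k :: "'f set \<times> 'c set \<times> 'a set"
  assume "i \<le> j \<and> j \<le> k"
  then show "i \<le> k" by (blast intro: order_trans)
next
  fix i j :: "'f set \<times> 'c set \<times> 'a set"
  assume "i \<le> j"
  then show "snd (snd i) \<subseteq> snd (snd j)" by (intro snd_mono)
qed

lemma ldom_diagram_system: "ldom diagram_system = {(x, i). i \<in> diagram_index \<and> x \<in> snd (snd i)}"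
  by (simp add: ldom_def diagram_system_def)

lemma lrel_diagram_system:
  "lrel diagram_system = {(p, q). p \<in> ldom diagram_system \<and> q \<in> ldom diagram_system \<and> fst p = fst q}"
  using diagram_index_directed by (auto simp: lrel_def ldom_diagram_system) (auto simp: diagram_system_def)

definition diagram_class :: "'a \<Rightarrow> ('a \<times> ('f set \<times> 'c set \<times> 'a set)) set" where
  "diagram_class x = {q \<in> ldom diagram_system. fst q = x}"

lemma Image_lrel_diagram_system:
  "p \<in> ldom diagram_system \<Longrightarrow> lrel diagram_system `` {p} = diagram_class (fst p)"
  unfolding lrel_diagram_system diagram_class_def by auto

lemma map_Image_lrel_diagram_system:
  assumes "i \<in> diagram_index" and "set xs \<subseteq> snd (snd i)"
  shows "map (\<lambda>y. lrel diagram_system `` {(y, i)}) xs = map diagram_class xs"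
proof (rule map_cong[OF refl])
  fix y assume "y \<in> set xs"
  with assms have "(y, i) \<in> ldom diagram_system" by (auto simp: ldom_diagram_system)
  then show "lrel diagram_system `` {(y, i)} = diagram_class y" by (simp add: Image_lrel_diagram_system)
qed

lemma singleton_in_ldom_diagram_system: "x \<in> alg_univ C \<Longrightarrow> (x, ({}, {}, {x})) \<in> ldom diagram_system"
  by (simp add: ldom_diagram_system diagram_index_def)

lemma inj_on_diagram_class: "inj_on diagram_class (alg_univ C)"
proof (rule inj_onI)
  fix x y assume x: "x \<in> alg_univ C" and eq: "diagram_class x = diagram_class y"
  from x have "(x, ({}, {}, {x})) \<in> diagram_class x"
    using singleton_in_ldom_diagram_system by (simp add: diagram_class_def)
  then have "(x, ({}, {}, {x})) \<in> diagram_class y" by (simp add: eq)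
  then show "x = y" by (simp add: diagram_class_def)
qed

lemma quotient_diagram_system: "ldom diagram_system // lrel diagram_system = diagram_class ` alg_univ C"
proof -
  have "ldom diagram_system // lrel diagram_system = (\<lambda>p. diagram_class (fst p)) ` ldom diagram_system"
    unfolding quotient_def by (auto simp: Image_lrel_diagram_system)
  also have "\<dots> = diagram_class ` fst ` ldom diagram_system" by (simp add: image_image)
  also have "fst ` ldom diagram_system = alg_univ C"
    using singleton_in_ldom_diagram_system by (force simp: ldom_diagram_system diagram_index_def)
  finally show ?thesis .
qed

context
  assumes C: "is_alg Fs ar Cs C"
begin

lemma limit_alg_op_diagram_system:
  assumes F: "F \<in> Fs" and xs: "set xs \<subseteq> alg_univ C" "length xs = ar F"
  shows "alg_op (limit_alg ar diagram_system) F (map diagram_class xs) = diagram_class (alg_op C F xs)"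
proof -
  define P where "P q \<longleftrightarrow> (\<exists>i ys. i \<in> diagram_index \<and> snd q \<in> diagram_index \<and> i \<le> snd q \<and>
     set ys \<subseteq> snd (snd i) \<and> length ys = ar F \<and>
     map (\<lambda>y. lrel diagram_system `` {(y, i)}) ys = map diagram_class xs \<and>
     Eq (App F (map Var ys)) (Var (fst q)) \<in> alg_diagram ar C (fst (snd q)) (fst (snd (snd q))) (snd (snd (snd q))))"
    for q
  have opC: "alg_op C F xs \<in> alg_univ C" using C F xs unfolding is_alg_def by auto
  define j where "j = ({F}, {} :: 'c set, insert (alg_op C F xs) (set xs))"
  have j: "j \<in> diagram_index" using F xs opC by (auto simp: j_def diagram_index_def)
  have "P (alg_op C F xs, j)"
    unfolding P_def using j xs map_Image_lrel_diagram_system[OF j, of xs]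
    by (intro exI[of _ j] exI[of _ xs]) (auto simp: j_def alg_diagram_def diagram_literals_def comp_def)
  moreover have "lrel diagram_system `` {q} = diagram_class (alg_op C F xs)" if "P q" for q
  proof -
    obtain i ys where i: "i \<in> diagram_index" "snd q \<in> diagram_index" "set ys \<subseteq> snd (snd i)"
      and eq: "map (\<lambda>y. lrel diagram_system `` {(y, i)}) ys = map diagram_class xs"
      and lit: "Eq (App F (map Var ys)) (Var (fst q)) \<in> alg_diagram ar C (fst (snd q)) (fst (snd (snd q))) (snd (snd (snd q)))"
      using \<open>P q\<close> unfolding P_def by blast
    have "set ys \<subseteq> alg_univ C" using i(1,3) unfolding diagram_index_def by fastforce
    moreover have "map diagram_class ys = map diagram_class xs"
      using eq map_Image_lrel_diagram_system[OF i(1,3)] by simp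
    ultimately have "ys = xs"
      using inj_on_diagram_class xs(1) by (simp add: inj_on_map_eq_map inj_on_subset)
    moreover have "alg_op C F ys = fst q"
      and lit': "Eq (App F (map Var ys)) (Var (fst q)) \<in> diagram_literals ar (fst (snd q)) (fst (snd (snd q))) (snd (snd (snd q)))"
      using lit by (auto simp: alg_diagram_def comp_def)
    moreover have "q \<in> ldom diagram_system"
      using i(2) vars_diagram_literals[OF lit'] by (simp add: ldom_diagram_system case_prod_beta)
    ultimately show ?thesis using Image_lrel_diagram_system by simp
  qed
  ultimately have "lrel diagram_system `` {SOME q. P q} = diagram_class (alg_op C F xs)"
    by (metis someI)
  then show ?thesis unfolding limit_alg_def P_def by (simp add: diagram_system_def)
qed

lemma limit_alg_cst_diagram_system:
  assumes c: "c \<in> Cs"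
  shows "alg_cst (limit_alg ar diagram_system) c = diagram_class (alg_cst C c)"
proof -
  define P where "P p \<longleftrightarrow> p \<in> ldom diagram_system \<and>
     Eq (Var (fst p)) (Cst c) \<in> alg_diagram ar C (fst (snd p)) (fst (snd (snd p))) (snd (snd (snd p)))" for p
  have "alg_cst C c \<in> alg_univ C" using C c unfolding is_alg_def by auto
  then have "P (alg_cst C c, ({}, {c}, {alg_cst C c}))"
    using c by (auto simp: P_def ldom_diagram_system diagram_index_def alg_diagram_def diagram_literals_def)
  moreover have "lrel diagram_system `` {p} = diagram_class (alg_cst C c)" if "P p" for p
    using that Image_lrel_diagram_system by (auto simp: P_def alg_diagram_def)
  ultimately have "lrel diagram_system `` {SOME p. P p} = diagram_class (alg_cst C c)"
    by (metis someI)
  then show ?thesis unfolding limit_alg_def P_def by (simp add: diagram_system_def)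
qed

lemma alg_iso_diagram_class: "alg_iso Fs ar Cs C (limit_alg ar diagram_system) diagram_class"
  unfolding alg_iso_def bij_betw_def
  using inj_on_diagram_class quotient_diagram_system limit_alg_op_diagram_system
    limit_alg_cst_diagram_system
  by (simp add: limit_alg_def)

lemma limit_over_diagram_system:
  assumes Th: "Th_ex Fs ar Cs C \<subseteq> Th_ex Fs ar Cs B"
  shows "limit_over Fs ar Cs B diagram_system"
  unfolding limit_over_def
proof (intro conjI ballI direct_system_diagram_system[OF C])
  fix i assume "i \<in> dI diagram_system"
  then obtain LF LC X where i: "i = (LF, LC, X)" "finite LF" "LF \<subseteq> Fs" "finite LC" "LC \<subseteq> Cs"
    "finite X" "X \<subseteq> alg_univ C"
    by (auto simp: diagram_system_def diagram_index_def)
  have "\<exists>b. b ` X \<subseteq> alg_univ B \<and> (\<forall>\<phi>\<in>alg_diagram ar C LF LC X. sat B b \<phi>)"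
    using C i finite_diagram_literals[of LF LC X ar]
    by (intro Th_ex_transfer_literals[OF Th, where a = id])
       (auto simp: is_alg_def alg_diagram_def intro: finite_subset)
  then show "\<exists>b. b ` dX diagram_system i \<subseteq> alg_univ B \<and> (\<forall>\<phi>\<in>dphi diagram_system i. sat B b \<phi>)"
    by (simp add: diagram_system_def i)
qed

end

end

theorem mainTheorem13:
  fixes Fs :: "'f set" and ar :: "'f \<Rightarrow> nat" and Cs :: "'c set"
    and B :: "('f, 'c, 'b) alg" and C :: "('f, 'c, 'a) alg"
  assumes "is_alg Fs ar Cs B" and "is_alg Fs ar Cs C"
    and "Th_ex Fs ar Cs C \<subseteq> Th_ex Fs ar Cs B"
  shows "\<exists>D :: ('f set \<times> 'c set \<times> 'a set, 'f, 'c, 'a) dsys.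
           limit_over Fs ar Cs B D \<and> (\<exists>h. alg_iso Fs ar Cs C (limit_alg ar D) h)"
  using limit_over_diagram_system[OF assms(2,3)] alg_iso_diagram_class[OF assms(2)] by blast

end
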